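(* If $G$ is a cyclically $4$-edge-connected cubic bipartite graph with at least $8$ vertices, then every edge of $G$ is contained in at least $3$ perfect matchings of $G$.
   Context: An edge-cut $E(A,B)$ is cyclic if both $G[A]$ and $G[B]$ contain a cycle; $G$ is cyclically $4$-edge-connected if it has no cyclic edge-cut with fewer than four edges. *)

theory Defs
  imports Main
begin

definition graph :: "'a set \<Rightarrow> 'a set set \<Rightarrow> bool" where
  "graph V E \<longleftrightarrow> finite V \<and> (\<forall>e\<in>E. \<exists>u v. u \<noteq> v \<and> u \<in> V \<and> v \<in> V \<and> e = {u, v})"

definition degree :: "'a set set \<Rightarrow> 'a \<Rightarrow> nat" where
  "degree E v = card {e\<in>E. v \<in> e}"

definition cubic :: "'a set \<Rightarrow> 'a set set \<Rightarrow> bool" where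
  "cubic V E \<longleftrightarrow> (\<forall>v\<in>V. degree E v = 3)"

definition bipartite :: "'a set \<Rightarrow> 'a set set \<Rightarrow> bool" where
  "bipartite V E \<longleftrightarrow> (\<exists>X Y. X \<union> Y = V \<and> X \<inter> Y = {} \<and>
      (\<forall>e\<in>E. card (e \<inter> X) = 1 \<and> card (e \<inter> Y) = 1))"

definition induced_edges :: "'a set set \<Rightarrow> 'a set \<Rightarrow> 'a set set" where
  "induced_edges E A = {e\<in>E. e \<subseteq> A}"

definition has_cycle :: "'a set \<Rightarrow> 'a set set \<Rightarrow> bool" where
  "has_cycle A F \<longleftrightarrow> (\<exists>vs. length vs \<ge> 3 \<and> distinct vs \<and> set vs \<subseteq> A \<and>
      (\<forall>i < length vs. {vs ! i, vs ! ((i + 1) mod length vs)} \<in> F))"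

definition edge_cut :: "'a set set \<Rightarrow> 'a set \<Rightarrow> 'a set \<Rightarrow> 'a set set" where
  "edge_cut E A B = {e\<in>E. e \<inter> A \<noteq> {} \<and> e \<inter> B \<noteq> {}}"

definition cyclic_edge_cut :: "'a set \<Rightarrow> 'a set set \<Rightarrow> 'a set \<Rightarrow> 'a set \<Rightarrow> bool" where
  "cyclic_edge_cut V E A B \<longleftrightarrow> A \<union> B = V \<and> A \<inter> B = {} \<and>
      has_cycle A (induced_edges E A) \<and> has_cycle B (induced_edges E B)"

definition cyclically_4_edge_connected :: "'a set \<Rightarrow> 'a set set \<Rightarrow> bool" where
  "cyclically_4_edge_connected V E \<longleftrightarrow>
     (\<forall>A B. cyclic_edge_cut V E A B \<longrightarrow> card (edge_cut E A B) \<ge> 4)"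

definition perfect_matching :: "'a set \<Rightarrow> 'a set set \<Rightarrow> 'a set set \<Rightarrow> bool" where
  "perfect_matching V E M \<longleftrightarrow> M \<subseteq> E \<and> (\<forall>v\<in>V. \<exists>!e. e \<in> M \<and> v \<in> e)"

end

theory Submission
  imports Defs
begin

text \<open>
  The heart of the proof is an expansion property: if \<open>u, x \<in> X\<close> are distinct, every
  nonempty \<open>S \<subseteq> X - {u, x}\<close> has at least \<open>|S| + 2\<close> neighbours. Otherwise both \<open>S \<union> N(S)\<close>
  and its complement span at least as many edges as vertices, hence contain cycles, while
  at most \<open>3|N(S)| - 3|S| \<le> 3\<close> edges leave \<open>S \<union> N(S)\<close>, a cyclic 3-edge-cut. By Hall's
  theorem the expansion property lets any two disjoint edges \<open>uv\<close>, \<open>xy\<close> be extended to a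
  perfect matching. Finally, for an edge \<open>e = uv\<close> choose \<open>w \<in> X\<close> not adjacent to \<open>v\<close>;
  the three edges at \<open>w\<close> give three distinct perfect matchings containing \<open>e\<close>.
\<close>

section \<open>Hall's theorem\<close>

definition hall_condition :: "('a \<Rightarrow> 'b set) \<Rightarrow> 'a set \<Rightarrow> bool" where
  "hall_condition N A \<longleftrightarrow> (\<forall>S\<subseteq>A. card S \<le> card (\<Union>(N ` S)))"

definition has_sdr :: "('a \<Rightarrow> 'b set) \<Rightarrow> 'a set \<Rightarrow> bool" where
  "has_sdr N A \<longleftrightarrow> (\<exists>f. inj_on f A \<and> (\<forall>a\<in>A. f a \<in> N a))"

lemma hall_condition_critical_remainder:
  assumes fin: "finite A" "\<forall>a\<in>A. finite (N a)" and hall: "hall_condition N A"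
    and S: "S \<subseteq> A" "card S = card (\<Union>(N ` S))"
  shows "hall_condition (\<lambda>a. N a - \<Union>(N ` S)) (A - S)"
  unfolding hall_condition_def
proof (intro allI impI)
  fix T assume T: "T \<subseteq> A - S"
  have fin_T: "finite T" and fin_S: "finite S" using T S(1) fin(1) finite_subset by blast+
  have union: "\<Union>((\<lambda>a. N a - \<Union>(N ` S)) ` T) = \<Union>(N ` (T \<union> S)) - \<Union>(N ` S)" by auto
  have "finite (\<Union>(N ` (T \<union> S)))" using fin(2) T S(1) fin_T fin_S by auto
  then have "card (\<Union>(N ` (T \<union> S)) - \<Union>(N ` S)) = card (\<Union>(N ` (T \<union> S))) - card S"
    using S(2) by (subst card_Diff_subset) (auto intro: finite_subset)
  moreover have "card (T \<union> S) \<le> card (\<Union>(N ` (T \<union> S)))"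
    using hall T S(1) unfolding hall_condition_def by blast
  moreover have "card (T \<union> S) = card T + card S"
    using T by (intro card_Un_disjoint fin_T fin_S) blast
  ultimately show "card T \<le> card (\<Union>((\<lambda>a. N a - \<Union>(N ` S)) ` T))"
    unfolding union by linarith
qed

lemma hall_condition_surplus_remainder:
  assumes fin: "finite A" "\<forall>a\<in>A. finite (N a)" and hall: "hall_condition N A"
    and surplus: "\<forall>S. S \<subseteq> A \<and> S \<noteq> {} \<and> S \<noteq> A \<longrightarrow> card S < card (\<Union>(N ` S))"
    and a: "a \<in> A"
  shows "hall_condition (\<lambda>x. N x - {b}) (A - {a})"
  unfolding hall_condition_def
proof (intro allI impI)
  fix T assume T: "T \<subseteq> A - {a}"
  show "card T \<le> card (\<Union>((\<lambda>x. N x - {b}) ` T))"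
  proof (cases "T = {}")
    case False
    have "card T < card (\<Union>(N ` T))" using surplus T False a by blast
    moreover have "finite (\<Union>(N ` T))" using fin T by (auto intro: finite_subset)
    moreover have "card (\<Union>(N ` T)) - card {b} \<le> card (\<Union>(N ` T) - {b})"
      by (rule diff_card_le_card_Diff) simp
    moreover have "\<Union>((\<lambda>x. N x - {b}) ` T) = \<Union>(N ` T) - {b}" by auto
    ultimately show ?thesis by (simp del: UN_simps)
  qed simp
qed

lemma has_sdr_combine:
  assumes "S \<subseteq> A" "has_sdr N S" "has_sdr (\<lambda>a. N a - \<Union>(N ` S)) (A - S)"
  shows "has_sdr N A"
proof -
  obtain f1 where f1: "inj_on f1 S" "\<forall>a\<in>S. f1 a \<in> N a" using assms(2) unfolding has_sdr_def by blast
  obtain f2 where f2: "inj_on f2 (A - S)" "\<forall>a\<in>A - S. f2 a \<in> N a - \<Union>(N ` S)"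
    using assms(3) unfolding has_sdr_def by blast
  define f where "f a = (if a \<in> S then f1 a else f2 a)" for a
  have apart: "f1 a \<noteq> f2 a'" if "a \<in> S" "a' \<in> A - S" for a a'
  proof -
    have "f1 a \<in> \<Union>(N ` S)" using f1(2) that(1) by blast
    moreover have "f2 a' \<notin> \<Union>(N ` S)" using f2(2) that(2) by blast
    ultimately show ?thesis by metis
  qed
  have "inj_on f A"
  proof (rule inj_onI)
    fix a a' assume "a \<in> A" "a' \<in> A" "f a = f a'"
    then show "a = a'" using f1(1) f2(1) apart apart[symmetric] unfolding f_def
      by (cases "a \<in> S"; cases "a' \<in> S") (auto dest: inj_onD)
  qed
  moreover have "\<forall>a\<in>A. f a \<in> N a" using f1(2) f2(2) unfolding f_def by auto
  ultimately show ?thesis unfolding has_sdr_def by blast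
qed

theorem hall:
  assumes "finite A" "\<forall>a\<in>A. finite (N a)" "hall_condition N A"
  shows "has_sdr N A"
  using assms
proof (induction "card A" arbitrary: A N rule: less_induct)
  case less
  show ?case
  proof (cases "\<exists>S. S \<subseteq> A \<and> S \<noteq> {} \<and> S \<noteq> A \<and> card S = card (\<Union>(N ` S))")
    case True
    then obtain S where S: "S \<subseteq> A" "S \<noteq> {}" "S \<noteq> A" "card S = card (\<Union>(N ` S))" by blast
    have "finite S" using S(1) less.prems(1) finite_subset by blast
    have "has_sdr N S"
    proof (rule less.hyps)
      show "card S < card A" using S less.prems(1) psubset_card_mono by blast
      show "hall_condition N S" using less.prems(3) S(1) unfolding hall_condition_def by blast
    qed (use \<open>finite S\<close> S(1) less.prems(2) in auto)
    moreover have "has_sdr (\<lambda>a. N a - \<Union>(N ` S)) (A - S)"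
    proof (rule less.hyps)
      have "0 < card S" using \<open>finite S\<close> S(2) by (simp add: card_gt_0_iff)
      then show "card (A - S) < card A"
        using card_Diff_subset[OF \<open>finite S\<close> S(1)] card_mono[OF less.prems(1) S(1)] by linarith
      show "hall_condition (\<lambda>a. N a - \<Union>(N ` S)) (A - S)"
        using hall_condition_critical_remainder[OF less.prems S(1,4)] .
    qed (use less.prems in auto)
    ultimately show ?thesis by (rule has_sdr_combine[OF S(1)])
  next
    case False
    show ?thesis
    proof (cases "A = {}")
      case nonempty: False
      then obtain a where a: "a \<in> A" by blast
      have surplus: "\<forall>S. S \<subseteq> A \<and> S \<noteq> {} \<and> S \<noteq> A \<longrightarrow> card S < card (\<Union>(N ` S))"
        using False less.prems(3) unfolding hall_condition_def by (metis le_neq_implies_less)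
      have "card {a} \<le> card (\<Union>(N ` {a}))"
        using less.prems(3) a unfolding hall_condition_def by blast
      then have "1 \<le> card (N a)" by simp
      then obtain b where b: "b \<in> N a" by (metis card.empty ex_in_conv not_one_le_zero)
      have "has_sdr (\<lambda>x. N x - {b}) (A - {a})"
      proof (rule less.hyps)
        show "card (A - {a}) < card A" using a less.prems(1) by (rule card_Diff1_less[rotated])
        show "hall_condition (\<lambda>x. N x - {b}) (A - {a})"
          using hall_condition_surplus_remainder[OF less.prems surplus a] .
      qed (use less.prems in auto)
      then obtain f where f: "inj_on f (A - {a})" "\<forall>x\<in>A - {a}. f x \<in> N x - {b}"
        unfolding has_sdr_def by blast
      have "inj_on (f(a := b)) A" "\<forall>x\<in>A. (f(a := b)) x \<in> N x"
        using f b unfolding inj_on_def by auto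
      then show ?thesis unfolding has_sdr_def by blast
    qed (simp add: has_sdr_def)
  qed
qed

section \<open>Cycles in graphs with many edges\<close>

lemma graph_finite_edges: "graph A F \<Longrightarrow> finite F"
  unfolding graph_def by (rule finite_subset[of _ "Pow A"]) auto

lemma graph_edge_at:
  assumes "graph A F" "e \<in> F" "h \<in> e"
  shows "\<exists>w. w \<noteq> h \<and> w \<in> A \<and> e = {h, w}"
  using assms unfolding graph_def by (metis doubleton_eq_iff insertE singletonD)

lemma graph_induced:
  assumes "graph V E" "W \<subseteq> V"
  shows "graph W (induced_edges E W)"
  unfolding graph_def
proof
  show "finite W" using assms finite_subset unfolding graph_def by blast
  show "\<forall>e\<in>induced_edges E W. \<exists>u v. u \<noteq> v \<and> u \<in> W \<and> v \<in> W \<and> e = {u, v}"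
  proof
    fix e assume "e \<in> induced_edges E W"
    then have "e \<in> E" "e \<subseteq> W" unfolding induced_edges_def by auto
    moreover obtain u v where "u \<noteq> v" "e = {u, v}"
      using \<open>e \<in> E\<close> assms(1) unfolding graph_def by blast
    ultimately show "\<exists>u v. u \<noteq> v \<and> u \<in> W \<and> v \<in> W \<and> e = {u, v}" by blast
  qed
qed

lemma has_cycle_mono: "has_cycle A F \<Longrightarrow> A \<subseteq> A' \<Longrightarrow> F \<subseteq> F' \<Longrightarrow> has_cycle A' F'"
  unfolding has_cycle_def by (meson subset_iff)

definition is_path :: "'a set set \<Rightarrow> 'a list \<Rightarrow> bool" where
  "is_path F vs \<longleftrightarrow> vs \<noteq> [] \<and> distinct vs \<and> (\<forall>i. Suc i < length vs \<longrightarrow> {vs ! i, vs ! Suc i} \<in> F)"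

lemma is_path_Cons:
  assumes "is_path F vs" "w \<notin> set vs" "{w, vs ! 0} \<in> F"
  shows "is_path F (w # vs)"
  unfolding is_path_def
proof (intro conjI allI impI)
  show "w # vs \<noteq> []" "distinct (w # vs)" using assms(1,2) unfolding is_path_def by simp_all
  fix i assume i: "Suc i < length (w # vs)"
  show "{(w # vs) ! i, (w # vs) ! Suc i} \<in> F"
  proof (cases i)
    case 0
    then show ?thesis using assms(3) by simp
  next
    case (Suc k)
    then show ?thesis using assms(1) i unfolding is_path_def by simp
  qed
qed

lemma path_chord_cycle:
  assumes path: "is_path F vs" "set vs \<subseteq> A"
    and j: "2 \<le> j" "j < length vs" and chord: "{vs ! j, vs ! 0} \<in> F"
  shows "has_cycle A F"
  unfolding has_cycle_def
proof (intro exI conjI allI impI)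
  let ?cs = "take (Suc j) vs"
  show "3 \<le> length ?cs" "distinct ?cs" "set ?cs \<subseteq> A"
    using path j unfolding is_path_def by (auto dest: in_set_takeD)
  fix i assume i: "i < length ?cs"
  show "{?cs ! i, ?cs ! ((i + 1) mod length ?cs)} \<in> F"
  proof (cases "i < j")
    case True
    then show ?thesis using path(1) j unfolding is_path_def by simp
  next
    case False
    then have "i = j" using i by simp
    then show ?thesis using chord j by simp
  qed
qed

text \<open>A finite graph of minimum degree at least two contains a cycle: a longest path
  cannot be extended, so its first vertex has a second neighbour further along it.\<close>
lemma min_degree_two_has_cycle:
  assumes G: "graph A F" and ne: "A \<noteq> {}" and deg: "\<forall>a\<in>A. 2 \<le> degree F a"
  shows "has_cycle A F"
proof -
  let ?P = "\<lambda>vs. is_path F vs \<and> set vs \<subseteq> A"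
  obtain a0 where "a0 \<in> A" using ne by blast
  then have P0: "?P [a0]" unfolding is_path_def by simp
  have "length vs < Suc (card A)" if "?P vs" for vs
    using that card_mono[of A "set vs"] distinct_card[of vs] G
    unfolding is_path_def graph_def by simp
  then obtain vs where vs: "?P vs" and longest: "\<And>ws. ?P ws \<Longrightarrow> length ws \<le> length vs"
    using ex_has_greatest_nat[of ?P "[a0]" length "Suc (card A)"] P0 by blast
  let ?h = "vs ! 0"
  have "?h \<in> A" using vs unfolding is_path_def by (simp add: subset_iff)
  then have "2 \<le> card {e\<in>F. ?h \<in> e}" using deg unfolding degree_def by blast
  then obtain e1 e2 where e12: "e1 \<in> F" "?h \<in> e1" "e2 \<in> F" "?h \<in> e2" "e1 \<noteq> e2"
    by (auto simp: numeral_2_eq_2 card_le_Suc_iff)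
  obtain w1 w2 where w12: "w1 \<noteq> ?h" "w1 \<in> A" "e1 = {?h, w1}" "w2 \<noteq> ?h" "w2 \<in> A" "e2 = {?h, w2}"
    using graph_edge_at[OF G e12(1,2)] graph_edge_at[OF G e12(3,4)] by blast
  then have "w1 \<noteq> w2" using e12(5) by blast
  then obtain w where "w \<in> {w1, w2}" "w \<noteq> vs ! 1" by blast
  then have w: "w \<noteq> ?h" "w \<in> A" "{w, ?h} \<in> F" "w \<noteq> vs ! 1"
    using w12 e12 by (auto simp: insert_commute)
  have "w \<in> set vs"
  proof (rule ccontr)
    assume "w \<notin> set vs"
    then have "?P (w # vs)" using vs w is_path_Cons by auto
    then show False using longest by fastforce
  qed
  then obtain j where j: "j < length vs" "vs ! j = w" by (metis in_set_conv_nth)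
  then have "2 \<le> j" using w(1,4) by (metis One_nat_def less_2_cases not_le)
  then show ?thesis using path_chord_cycle[of F vs A j] vs j w(3) by blast
qed

text \<open>A finite nonempty graph with at least as many edges as vertices contains a cycle:
  vertices of degree at most one can be deleted without destroying this inequality.\<close>
lemma edges_ge_vertices_has_cycle:
  assumes "graph A F" "A \<noteq> {}" "card A \<le> card F"
  shows "has_cycle A F"
  using assms
proof (induction "card A" arbitrary: A F rule: less_induct)
  case less
  show ?case
  proof (cases "\<exists>w\<in>A. degree F w \<le> 1")
    case False
    then show ?thesis using min_degree_two_has_cycle[OF less.prems(1,2)] by force
  next
    case True
    then obtain w where w: "w \<in> A" "card {e\<in>F. w \<in> e} \<le> 1" unfolding degree_def by blast
    let ?A = "A - {w}" and ?F = "{e\<in>F. w \<notin> e}"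
    have finA: "finite A" and finF: "finite F"
      using less.prems(1) graph_finite_edges unfolding graph_def by auto
    have G': "graph ?A ?F" using less.prems(1) unfolding graph_def by (simp, metis insertCI)
    have "F = ?F \<union> {e\<in>F. w \<in> e}" by blast
    then have "card F = card ?F + card {e\<in>F. w \<in> e}"
      using finF by (metis (no_types, lifting) card_Un_disjoint disjoint_iff finite_Un mem_Collect_eq)
    moreover have "card ?A = card A - 1" using w(1) finA by simp
    ultimately have count: "card ?A \<le> card ?F" using w(2) less.prems(3) by linarith
    have "?A \<noteq> {}"
    proof
      assume "?A = {}"
      then have "A = {w}" using w(1) by blast
      then have "F = {}" using less.prems(1) unfolding graph_def by blast
      then show False using less.prems(3) \<open>A = {w}\<close> by simp
    qed
    then have "has_cycle ?A ?F"
      using less.hyps[OF card_Diff1_less[OF finA w(1)] G' _ count] by blast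
    then show ?thesis by (rule has_cycle_mono) auto
  qed
qed

section \<open>Cubic bipartite graphs\<close>

locale cubic_bipartite =
  fixes V :: "'a set" and E :: "'a set set" and X Y :: "'a set"
  assumes graph: "graph V E" and cubic: "cubic V E"
    and sides_cover: "X \<union> Y = V" and sides_disjoint: "X \<inter> Y = {}"
    and sides: "\<forall>e\<in>E. card (e \<inter> X) = 1 \<and> card (e \<inter> Y) = 1"
begin

lemma finite_V: "finite V" and finite_X: "finite X" and finite_Y: "finite Y"
  using graph sides_cover unfolding graph_def by auto

lemma finite_E: "finite E"
  using graph by (rule graph_finite_edges)

lemma edge_meets_sides:
  assumes "e \<in> E"
  obtains a b where "e \<inter> X = {a}" "e \<inter> Y = {b}"
proof -
  have "card (e \<inter> X) = 1" "card (e \<inter> Y) = 1" using sides assms by auto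
  then show ?thesis using that by (metis One_nat_def card_1_singleton_iff)
qed

lemma edge_XY:
  assumes "e \<in> E"
  shows "\<exists>a b. a \<in> X \<and> b \<in> Y \<and> e = {a, b}"
proof -
  obtain a b where ab: "e \<inter> X = {a}" "e \<inter> Y = {b}" using edge_meets_sides[OF assms] .
  have "e \<subseteq> V" using graph assms unfolding graph_def by auto
  then have "e = (e \<inter> X) \<union> (e \<inter> Y)" using sides_cover by blast
  then show ?thesis using ab by auto
qed

lemma same_side_edge:
  assumes "e \<in> E" "z1 \<in> e" "z2 \<in> e" "z1 \<in> X \<and> z2 \<in> X \<or> z1 \<in> Y \<and> z2 \<in> Y"
  shows "z1 = z2"
proof -
  obtain a b where "e \<inter> X = {a}" "e \<inter> Y = {b}" using edge_meets_sides[OF assms(1)] .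
  then show ?thesis using assms(2-4) by (elim disjE) (metis IntI singletonD)+
qed

definition incident :: "'a \<Rightarrow> 'a set set" where
  "incident v = {e\<in>E. v \<in> e}"

lemma card_incident: "v \<in> V \<Longrightarrow> card (incident v) = 3"
  using cubic unfolding cubic_def degree_def incident_def by simp

lemma incident_X:
  assumes "a \<in> X" "e \<in> incident a"
  shows "\<exists>b\<in>Y. e = {a, b}"
proof -
  have e: "e \<in> E" "a \<in> e" using assms(2) unfolding incident_def by auto
  obtain a' b where "a' \<in> X" "b \<in> Y" "e = {a', b}" using edge_XY[OF e(1)] by blast
  moreover have "a' = a" using same_side_edge[OF e(1) _ e(2)] assms(1) calculation by simp
  ultimately show ?thesis by blast
qed

lemma incident_Y:
  assumes "b \<in> Y" "e \<in> incident b"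
  shows "\<exists>a\<in>X. e = {a, b}"
proof -
  have e: "e \<in> E" "b \<in> e" using assms(2) unfolding incident_def by auto
  obtain a b' where "a \<in> X" "b' \<in> Y" "e = {a, b'}" using edge_XY[OF e(1)] by blast
  moreover have "b' = b" using same_side_edge[OF e(1) _ e(2)] assms(1) calculation by simp
  ultimately show ?thesis by blast
qed

lemma card_incident_side:
  assumes "Z \<subseteq> X \<or> Z \<subseteq> Y"
  shows "card (\<Union>z\<in>Z. incident z) = 3 * card Z"
proof -
  have "finite Z" using assms finite_X finite_Y finite_subset by blast
  moreover have "incident z1 \<inter> incident z2 = {}" if "z1 \<in> Z" "z2 \<in> Z" "z1 \<noteq> z2" for z1 z2
    using that assms same_side_edge unfolding incident_def by blast
  moreover have "finite (incident z)" for z unfolding incident_def using finite_E by simp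
  ultimately have "card (\<Union>z\<in>Z. incident z) = (\<Sum>z\<in>Z. card (incident z))"
    by (intro card_UN_disjoint) auto
  also have "\<dots> = (\<Sum>z\<in>Z. 3)" using card_incident assms sides_cover by (intro sum.cong) auto
  finally show ?thesis by simp
qed

lemma edges_at_sides: "E = (\<Union>x\<in>X. incident x)" "E = (\<Union>y\<in>Y. incident y)"
proof -
  have "e \<in> (\<Union>x\<in>X. incident x) \<and> e \<in> (\<Union>y\<in>Y. incident y)" if "e \<in> E" for e
    using edge_XY[OF that] that unfolding incident_def by auto
  then show "E = (\<Union>x\<in>X. incident x)" "E = (\<Union>y\<in>Y. incident y)"
    unfolding incident_def by blast+
qed

text \<open>Both colour classes have the same size, since each meets every edge once.\<close>
lemma card_X_eq_card_Y: "card X = card Y"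
  using card_incident_side[of X] card_incident_side[of Y] edges_at_sides by simp

lemma card_V: "card V = 2 * card X"
  using sides_cover sides_disjoint finite_X finite_Y card_Un_disjoint card_X_eq_card_Y by fastforce

end

section \<open>Neighbourhoods expand in cyclically 4-edge-connected cubic bipartite graphs\<close>

context cubic_bipartite
begin

definition neighbours :: "'a set \<Rightarrow> 'a set" where
  "neighbours S = {b\<in>Y. \<exists>s\<in>S. {s, b} \<in> E}"

definition closed_nbhd :: "'a set \<Rightarrow> 'a set" where
  "closed_nbhd S = S \<union> neighbours S"

lemma neighbours_subset: "neighbours S \<subseteq> Y"
  unfolding neighbours_def by blast

lemma finite_neighbours: "finite (neighbours S)"
  using finite_Y neighbours_subset by (rule finite_subset[rotated])

lemma card_closed_nbhd: "S \<subseteq> X \<Longrightarrow> card (closed_nbhd S) = card S + card (neighbours S)"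
  unfolding closed_nbhd_def using finite_X neighbours_subset sides_disjoint finite_neighbours
  by (intro card_Un_disjoint) (auto intro: finite_subset)

lemma closed_nbhd_subset: "S \<subseteq> X \<Longrightarrow> closed_nbhd S \<subseteq> V"
  unfolding closed_nbhd_def using neighbours_subset sides_cover by blast

lemma incident_inside_closed_nbhd:
  assumes "S \<subseteq> X"
  shows "(\<Union>s\<in>S. incident s) \<subseteq> induced_edges E (closed_nbhd S) \<inter> (\<Union>y\<in>neighbours S. incident y)"
proof
  fix e assume "e \<in> (\<Union>s\<in>S. incident s)"
  then obtain s where s: "s \<in> S" "e \<in> incident s" by blast
  then obtain b where b: "b \<in> Y" "e = {s, b}" using incident_X assms by blast
  have "e \<in> E" using s(2) unfolding incident_def by simp
  then have "b \<in> neighbours S" using b s(1) unfolding neighbours_def by blast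
  then show "e \<in> induced_edges E (closed_nbhd S) \<inter> (\<Union>y\<in>neighbours S. incident y)"
    using \<open>e \<in> E\<close> b s(1) unfolding induced_edges_def closed_nbhd_def incident_def by blast
qed

lemma incident_outside_closed_nbhd:
  assumes "S \<subseteq> X"
  shows "(\<Union>y\<in>Y - neighbours S. incident y) \<subseteq> induced_edges E (V - closed_nbhd S)"
proof
  fix e assume "e \<in> (\<Union>y\<in>Y - neighbours S. incident y)"
  then obtain y where y: "y \<in> Y - neighbours S" "e \<in> incident y" by blast
  then obtain a where a: "a \<in> X" "e = {a, y}" using incident_Y by blast
  have "e \<in> E" using y(2) unfolding incident_def by simp
  then have "a \<notin> S" using a y(1) unfolding neighbours_def by blast
  then have "e \<subseteq> V - closed_nbhd S"
    using a y(1) assms sides_cover sides_disjoint neighbours_subset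
    unfolding closed_nbhd_def by blast
  then show "e \<in> induced_edges E (V - closed_nbhd S)"
    using \<open>e \<in> E\<close> unfolding induced_edges_def by blast
qed

lemma cut_closed_nbhd_subset:
  assumes "S \<subseteq> X"
  shows "edge_cut E (closed_nbhd S) (V - closed_nbhd S)
    \<subseteq> (\<Union>y\<in>neighbours S. incident y) - (\<Union>s\<in>S. incident s)"
proof
  fix e assume e: "e \<in> edge_cut E (closed_nbhd S) (V - closed_nbhd S)"
  then have eE: "e \<in> E" unfolding edge_cut_def by simp
  obtain a b where ab: "a \<in> X" "b \<in> Y" "e = {a, b}" using edge_XY[OF eE] by blast
  have "a \<notin> S"
  proof
    assume "a \<in> S"
    then have "b \<in> neighbours S" using ab eE unfolding neighbours_def by blast
    then have "e \<subseteq> closed_nbhd S" using ab \<open>a \<in> S\<close> unfolding closed_nbhd_def by blast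
    then show False using e unfolding edge_cut_def by blast
  qed
  then have "a \<notin> closed_nbhd S"
    using ab(1) sides_disjoint neighbours_subset unfolding closed_nbhd_def by blast
  then have "b \<in> neighbours S"
    using e ab assms sides_disjoint unfolding edge_cut_def closed_nbhd_def by blast
  moreover have "e \<in> incident b" "e \<notin> (\<Union>s\<in>S. incident s)"
    using eE ab \<open>a \<notin> S\<close> assms sides_disjoint unfolding incident_def by auto
  ultimately show "e \<in> (\<Union>y\<in>neighbours S. incident y) - (\<Union>s\<in>S. incident s)" by blast
qed

lemma card_cut_closed_nbhd:
  assumes "S \<subseteq> X"
  shows "card (edge_cut E (closed_nbhd S) (V - closed_nbhd S)) + 3 * card S \<le> 3 * card (neighbours S)"
proof -
  let ?IN = "\<Union>y\<in>neighbours S. incident y" and ?IS = "\<Union>s\<in>S. incident s"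
  have fin: "finite ?IN" unfolding incident_def using finite_E finite_neighbours by auto
  have sub: "?IS \<subseteq> ?IN" using incident_inside_closed_nbhd[OF assms] by blast
  have "card (?IN - ?IS) = 3 * card (neighbours S) - 3 * card S"
    using card_Diff_subset[OF finite_subset[OF sub fin] sub] card_incident_side assms
      neighbours_subset by simp
  moreover have "card ?IS \<le> card ?IN" using card_mono[OF fin sub] .
  moreover have "card (edge_cut E (closed_nbhd S) (V - closed_nbhd S)) \<le> card (?IN - ?IS)"
    using card_mono[OF _ cut_closed_nbhd_subset[OF assms]] fin by simp
  ultimately show ?thesis using card_incident_side assms neighbours_subset by simp
qed

text \<open>If \<open>S\<close> has few neighbours, its closed neighbourhood spans at least as many edges
  as vertices, hence contains a cycle.\<close>
lemma closed_nbhd_has_cycle: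
  assumes "S \<subseteq> X" "S \<noteq> {}" "card (neighbours S) \<le> 2 * card S"
  shows "has_cycle (closed_nbhd S) (induced_edges E (closed_nbhd S))"
proof (rule edges_ge_vertices_has_cycle)
  show "graph (closed_nbhd S) (induced_edges E (closed_nbhd S))"
    using graph_induced[OF graph closed_nbhd_subset[OF assms(1)]] .
  show "closed_nbhd S \<noteq> {}" using assms(2) unfolding closed_nbhd_def by blast
  have "finite (induced_edges E (closed_nbhd S))" unfolding induced_edges_def using finite_E by simp
  then have "3 * card S \<le> card (induced_edges E (closed_nbhd S))"
    using card_mono incident_inside_closed_nbhd[OF assms(1)] card_incident_side[of S] assms(1)
    by (metis (no_types, lifting) le_inf_iff)
  then show "card (closed_nbhd S) \<le> card (induced_edges E (closed_nbhd S))"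
    using card_closed_nbhd[OF assms(1)] assms(3) by linarith
qed

lemma outside_closed_nbhd_has_cycle:
  assumes "S \<subseteq> X" "S \<noteq> X" "2 * card (neighbours S) \<le> card X + card S"
  shows "has_cycle (V - closed_nbhd S) (induced_edges E (V - closed_nbhd S))"
proof (rule edges_ge_vertices_has_cycle)
  show "graph (V - closed_nbhd S) (induced_edges E (V - closed_nbhd S))"
    using graph_induced[OF graph] by blast
  show "V - closed_nbhd S \<noteq> {}"
    using assms(1,2) sides_cover sides_disjoint neighbours_subset unfolding closed_nbhd_def by blast
  have "card (V - closed_nbhd S) = 2 * card X - card S - card (neighbours S)"
    using card_V card_Diff_subset[OF _ closed_nbhd_subset[OF assms(1)]] card_closed_nbhd[OF assms(1)]
      finite_V finite_subset[OF closed_nbhd_subset[OF assms(1)]] by simp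
  moreover have "finite (induced_edges E (V - closed_nbhd S))"
    unfolding induced_edges_def using finite_E by simp
  then have "3 * card (Y - neighbours S) \<le> card (induced_edges E (V - closed_nbhd S))"
    using card_mono[OF _ incident_outside_closed_nbhd[OF assms(1)]] card_incident_side[of "Y - neighbours S"]
    by simp
  moreover have "card (Y - neighbours S) = card Y - card (neighbours S)"
    using card_Diff_subset[OF finite_neighbours neighbours_subset] .
  moreover have "card (neighbours S) \<le> card Y" using card_mono[OF finite_Y neighbours_subset] .
  ultimately show "card (V - closed_nbhd S) \<le> card (induced_edges E (V - closed_nbhd S))"
    using assms(3) card_X_eq_card_Y by linarith
qed

text \<open>Otherwise the cut around its
  closed neighbourhood would be a cyclic edge cut with at most three edges.\<close>
lemma neighbourhood_expansion:
  assumes c4: "cyclically_4_edge_connected V E"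
    and ux: "u \<in> X" "x \<in> X" "u \<noteq> x" and S: "S \<subseteq> X - {u, x}" "S \<noteq> {}"
  shows "card S + 2 \<le> card (neighbours S)"
proof (rule ccontr)
  assume "\<not> card S + 2 \<le> card (neighbours S)"
  then have few: "card (neighbours S) \<le> card S + 1" by simp
  have SX: "S \<subseteq> X" "S \<noteq> X" using S ux by auto
  have "0 < card S" using S(2) finite_subset[OF SX(1) finite_X] by (simp add: card_gt_0_iff)
  moreover have "card S + 2 \<le> card X"
  proof -
    have "card (S \<union> {u, x}) = card S + card {u, x}"
      using S(1) finite_subset[OF SX(1) finite_X] by (intro card_Un_disjoint) auto
    moreover have "card (S \<union> {u, x}) \<le> card X" using S(1) ux by (intro card_mono finite_X) auto
    ultimately show ?thesis using ux(3) by simp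
  qed
  ultimately have "cyclic_edge_cut V E (closed_nbhd S) (V - closed_nbhd S)"
    unfolding cyclic_edge_cut_def
    using closed_nbhd_subset[OF SX(1)] closed_nbhd_has_cycle[OF SX(1) S(2)]
      outside_closed_nbhd_has_cycle[OF SX] few by auto
  then have "4 \<le> card (edge_cut E (closed_nbhd S) (V - closed_nbhd S))"
    using c4 unfolding cyclically_4_edge_connected_def by blast
  then show False using card_cut_closed_nbhd[OF SX(1)] few by linarith
qed

end

section \<open>Perfect matchings through two prescribed edges\<close>

context cubic_bipartite
begin

lemma perfect_matching_of_bij:
  assumes bij: "bij_betw h X Y" and edges: "\<forall>a\<in>X. {a, h a} \<in> E"
  shows "perfect_matching V E ((\<lambda>a. {a, h a}) ` X)"
  unfolding perfect_matching_def
proof (intro conjI ballI)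
  show "(\<lambda>a. {a, h a}) ` X \<subseteq> E" using edges by auto
  have hY: "h a \<in> Y" if "a \<in> X" for a using bij that by (simp add: bij_betw_apply)
  fix t assume "t \<in> V"
  then consider "t \<in> X" | a0 where "a0 \<in> X" "t = h a0"
    using sides_cover bij by (metis Un_iff bij_betw_imp_surj_on imageE)
  then obtain a0 where a0: "a0 \<in> X" "t \<in> {a0, h a0}"
    and unique: "\<And>a. a \<in> X \<Longrightarrow> t \<in> {a, h a} \<Longrightarrow> a = a0"
  proof cases
    case 1
    have uniq: "a = t" if "a \<in> X" "t \<in> {a, h a}" for a
      using that hY[OF that(1)] sides_disjoint 1 by auto
    show thesis by (rule that[of t]) (use 1 uniq in blast)+
  next
    case 2
    have uniq: "a = a0" if "a \<in> X" "t \<in> {a, h a}" for a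
      using that hY[OF that(1)] hY[OF 2(1)] sides_disjoint 2 bij_betw_imp_inj_on[OF bij]
      by (auto dest: inj_onD)
    show thesis by (rule that[of a0]) (use 2 uniq in blast)+
  qed
  show "\<exists>!e. e \<in> (\<lambda>a. {a, h a}) ` X \<and> t \<in> e"
  proof (rule ex1I[of _ "{a0, h a0}"])
    show "{a0, h a0} \<in> (\<lambda>a. {a, h a}) ` X \<and> t \<in> {a0, h a0}" using a0 by blast
    fix e assume "e \<in> (\<lambda>a. {a, h a}) ` X \<and> t \<in> e"
    then obtain a where "a \<in> X" "e = {a, h a}" "t \<in> {a, h a}" by blast
    then show "e = {a0, h a0}" using unique by blast
  qed
qed

text \<open>Any two disjoint edges \<open>uv\<close> and \<open>xy\<close> lie in a common perfect matching: by the expansion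
  property, Hall's condition holds after deleting \<open>u, v, x, y\<close>.\<close>
lemma perfect_matching_through_two_edges:
  assumes c4: "cyclically_4_edge_connected V E"
    and ux: "u \<in> X" "x \<in> X" "u \<noteq> x" and vy: "v \<in> Y" "y \<in> Y" "v \<noteq> y"
    and edges: "{u, v} \<in> E" "{x, y} \<in> E"
  shows "\<exists>M. perfect_matching V E M \<and> {u, v} \<in> M \<and> {x, y} \<in> M"
proof -
  let ?A = "X - {u, x}" and ?B = "Y - {v, y}"
  define N where "N a = {b\<in>?B. {a, b} \<in> E}" for a
  have "hall_condition N ?A"
    unfolding hall_condition_def
  proof (intro allI impI)
    fix S assume S: "S \<subseteq> ?A"
    have "\<Union>(N ` S) = neighbours S - {v, y}" unfolding N_def neighbours_def by auto
    moreover have "card (neighbours S) \<le> card (neighbours S - {v, y}) + 2"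
      using diff_card_le_card_Diff[of "{v, y}" "neighbours S"] vy(3) by simp
    ultimately show "card S \<le> card (\<Union>(N ` S))"
      using neighbourhood_expansion[OF c4 ux S] by (cases "S = {}") auto
  qed
  then obtain g where g: "inj_on g ?A" "\<forall>a\<in>?A. g a \<in> N a"
    using hall[of ?A N] finite_X finite_Y unfolding has_sdr_def N_def by auto
  have card_AB: "card ?A = card ?B"
    using ux vy card_X_eq_card_Y by (simp add: card_Diff_subset finite_X finite_Y)
  have "g ` ?A = ?B"
    using g card_AB unfolding N_def
    by (intro card_subset_eq) (auto simp: card_image finite_Y)
  define h where "h = g(u := v, x := y)"
  have h_image: "h ` X = Y"
  proof -
    have "h ` insert u (insert x ?A) = insert v (insert y (g ` ?A))"
      using ux(3) unfolding h_def by auto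
    moreover have "insert u (insert x ?A) = X" "insert v (insert y ?B) = Y" using ux vy by auto
    ultimately show ?thesis using \<open>g ` ?A = ?B\<close> by simp
  qed
  then have "bij_betw h X Y"
    unfolding bij_betw_def using eq_card_imp_inj_on[OF finite_X, of h] card_X_eq_card_Y by simp
  moreover have "\<forall>a\<in>X. {a, h a} \<in> E"
    using g(2) edges ux(3) unfolding h_def N_def by auto
  ultimately have "perfect_matching V E ((\<lambda>a. {a, h a}) ` X)"
    by (rule perfect_matching_of_bij)
  moreover have "{u, v} \<in> (\<lambda>a. {a, h a}) ` X" "{x, y} \<in> (\<lambda>a. {a, h a}) ` X"
    using ux unfolding h_def by (auto intro!: image_eqI)
  ultimately show ?thesis by blast
qed

end

section \<open>Counting perfect matchings through an edge\<close>

text \<open>If every edge at a vertex \<open>w\<close> lies in a perfect matching together with \<open>e\<close>, then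
  there are at least \<open>degree E w\<close> perfect matchings containing \<open>e\<close>: distinct edges at \<open>w\<close>
  force distinct matchings, since a perfect matching covers \<open>w\<close> only once.\<close>
lemma degree_le_card_matchings_through:
  assumes fin: "finite E" and w: "w \<in> V"
    and ext: "\<forall>f\<in>E. w \<in> f \<longrightarrow> (\<exists>M. perfect_matching V E M \<and> e \<in> M \<and> f \<in> M)"
  shows "degree E w \<le> card {M. perfect_matching V E M \<and> e \<in> M}"
proof -
  let ?Ms = "{M. perfect_matching V E M \<and> e \<in> M}"
  define edge_at where "edge_at M = (THE f. f \<in> M \<and> w \<in> f)" for M
  have "finite ?Ms" using fin by (rule finite_subset[rotated, OF finite_Pow_iff[THEN iffD2]])
      (auto simp: perfect_matching_def)
  have "{f\<in>E. w \<in> f} \<subseteq> edge_at ` ?Ms"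
  proof
    fix f assume "f \<in> {f\<in>E. w \<in> f}"
    then obtain M where M: "perfect_matching V E M" "e \<in> M" "f \<in> M" "w \<in> f" using ext by blast
    then have "\<exists>!g. g \<in> M \<and> w \<in> g" using w unfolding perfect_matching_def by blast
    then have "edge_at M = f" unfolding edge_at_def by (rule the1_equality) (use M(3,4) in simp)
    then show "f \<in> edge_at ` ?Ms" using M(1,2) by blast
  qed
  then have "degree E w \<le> card (edge_at ` ?Ms)"
    unfolding degree_def using \<open>finite ?Ms\<close> by (intro card_mono) auto
  also have "\<dots> \<le> card ?Ms" using \<open>finite ?Ms\<close> by (rule card_image_le)
  finally show ?thesis .
qed

context cubic_bipartite
begin

text \<open>A vertex of \<open>Y\<close> has only three neighbours, so it misses some vertex of a larger \<open>X\<close>.\<close>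
lemma exists_non_neighbour:
  assumes "v \<in> Y" "4 \<le> card X"
  shows "\<exists>w\<in>X. {w, v} \<notin> E"
proof (rule ccontr)
  assume "\<not> (\<exists>w\<in>X. {w, v} \<notin> E)"
  then have "(\<lambda>a. {a, v}) ` X \<subseteq> incident v" unfolding incident_def by auto
  moreover have "inj_on (\<lambda>a. {a, v}) X"
    using assms(1) sides_disjoint by (auto intro!: inj_onI simp: doubleton_eq_iff)
  moreover have "finite (incident v)" unfolding incident_def using finite_E by simp
  ultimately have "card X \<le> card (incident v)" by (intro card_inj_on_le)
  then show False using card_incident[of v] assms sides_cover by auto
qed

end

text \<open>Pick \<open>w\<close> on the side
  of \<open>u\<close> not adjacent to \<open>v\<close>; each of the three edges at \<open>w\<close> extends together with \<open>e\<close>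
  to a perfect matching.\<close>
theorem mainTheorem14:
  fixes V :: "'a set" and E :: "'a set set"
  assumes "graph V E"
    and "cubic V E"
    and "bipartite V E"
    and "cyclically_4_edge_connected V E"
    and "card V \<ge> 8"
    and "e \<in> E"
  shows "card {M. perfect_matching V E M \<and> e \<in> M} \<ge> 3"
proof -
  obtain X Y where "cubic_bipartite V E X Y"
    using assms(1-3) unfolding bipartite_def cubic_bipartite_def by blast
  then interpret cubic_bipartite V E X Y .
  obtain u v where uv: "u \<in> X" "v \<in> Y" "e = {u, v}" using edge_XY[OF assms(6)] by blast
  have "4 \<le> card X" using card_V assms(5) by simp
  then obtain w where w: "w \<in> X" "{w, v} \<notin> E" using exists_non_neighbour[OF uv(2)] by blast
  have "\<exists>M. perfect_matching V E M \<and> e \<in> M \<and> f \<in> M" if f: "f \<in> E" "w \<in> f" for f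
  proof -
    obtain z where z: "z \<in> Y" "f = {w, z}" using incident_X[OF w(1)] f unfolding incident_def by blast
    moreover have "w \<noteq> u" "v \<noteq> z" using w(2) assms(6) uv f z by auto
    ultimately show ?thesis
      using perfect_matching_through_two_edges[OF assms(4) uv(1) w(1) _ uv(2)] assms(6) f uv by auto
  qed
  then have "degree E w \<le> card {M. perfect_matching V E M \<and> e \<in> M}"
    using degree_le_card_matchings_through[OF finite_E] w(1) sides_cover by blast
  then show ?thesis using card_incident w(1) sides_cover unfolding incident_def degree_def by auto
qed

end
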